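(* Assume the Continuum Hypothesis. Then there exists a topological space $X$ such that \textsc{Bob} has a winning strategy in $\mathsf{BM}_\omega(X)$ but \textsc{Bob} has no winning strategy in $\mathsf{BM}_\mathrm{fin}(X)$.
   Context: The game $\mathsf{BM}_\mathrm{fin}(X)$: \textsc{Alice} plays a non-empty open set $A_0$; \textsc{Bob} plays a finite collection $\mathcal{B}_0$ of non-empty open subsets of $A_0$; in inning $n+1$, for each $B \in \mathcal{B}_n$ \textsc{Alice} plays a non-empty open set $A_B \subseteq B$, letting $\mathcal{A}_{n+1}=\{A_B : B\in\mathcal{B}_n\}$, and \textsc{Bob} plays a finite collection $\mathcal{B}_{n+1}$ of non-empty open subsets of $\bigcup\mathcal{A}_{n+1}$; \textsc{Bob} wins if $\bigcap_{n}\bigcup\mathcal{B}_n\neq\emptyset$, otherwise \textsc{Alice} wins. The game $\mathsf{BM}_\omega(X)$ is defined identically except that each collection $\mathcal{B}_n$ played by \textsc{Bob} is countable instead of finite. *)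

theory Defs
  imports "HOL-Analysis.Analysis" "HOL-Library.Equipollence"
begin

definition continuum_hypothesis :: bool where
  "continuum_hypothesis \<longleftrightarrow>
     (\<forall>A :: real set. countable A \<or> A \<approx> (UNIV :: real set))"

definition BM_bob_legal ::
  "'a topology \<Rightarrow> ('a set set \<Rightarrow> bool) \<Rightarrow> 'a set \<Rightarrow> 'a set set \<Rightarrow> bool" where
  "BM_bob_legal X P U \<B> \<longleftrightarrow> P \<B> \<and> (\<forall>B\<in>\<B>. openin X B \<and> B \<noteq> {} \<and> B \<subseteq> U)"

definition BM_alice_legal ::
  "'a topology \<Rightarrow> 'a set set \<Rightarrow> ('a set \<Rightarrow> 'a set) \<Rightarrow> bool" where
  "BM_alice_legal X \<B> g \<longleftrightarrow> (\<forall>B\<in>\<B>. openin X (g B) \<and> g B \<noteq> {} \<and> g B \<subseteq> B)"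

text \<open>A strategy for Bob maps Alice's first move A0 and the list of her subsequent
  moves to Bob's next collection.  Bob's n-th collection in the play where Alice plays
  A0 and then f 0, f 1, ... (f k being her move in inning k+1):\<close>
definition BM_bob_move ::
  "('a set \<Rightarrow> ('a set \<Rightarrow> 'a set) list \<Rightarrow> 'a set set) \<Rightarrow> 'a set \<Rightarrow> (nat \<Rightarrow> 'a set \<Rightarrow> 'a set) \<Rightarrow> nat \<Rightarrow> 'a set set" where
  "BM_bob_move \<sigma> A0 f n = \<sigma> A0 (map f [0..<n])"

definition BM_bob_winning_strategy ::
  "'a topology \<Rightarrow> ('a set set \<Rightarrow> bool) \<Rightarrow> ('a set \<Rightarrow> ('a set \<Rightarrow> 'a set) list \<Rightarrow> 'a set set) \<Rightarrow> bool" where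
  "BM_bob_winning_strategy X P \<sigma> \<longleftrightarrow>
     (\<forall>A0 f. openin X A0 \<and> A0 \<noteq> {} \<longrightarrow>
        BM_bob_legal X P A0 (BM_bob_move \<sigma> A0 f 0)
      \<and> (\<forall>n. (\<forall>k\<le>n. BM_alice_legal X (BM_bob_move \<sigma> A0 f k) (f k)) \<longrightarrow>
              BM_bob_legal X P (\<Union> (f n ` BM_bob_move \<sigma> A0 f n)) (BM_bob_move \<sigma> A0 f (Suc n)))
      \<and> ((\<forall>n. BM_alice_legal X (BM_bob_move \<sigma> A0 f n) (f n)) \<longrightarrow>
              (\<Inter>n. \<Union> (BM_bob_move \<sigma> A0 f n)) \<noteq> {}))"

definition BM_bob_has_winning_strategy :: "'a topology \<Rightarrow> ('a set set \<Rightarrow> bool) \<Rightarrow> bool" where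
  "BM_bob_has_winning_strategy X P \<longleftrightarrow> (\<exists>\<sigma>. BM_bob_winning_strategy X P \<sigma>)"

abbreviation bob_wins_BM_fin :: "'a topology \<Rightarrow> bool" where
  "bob_wins_BM_fin X \<equiv> BM_bob_has_winning_strategy X finite"

abbreviation bob_wins_BM_omega :: "'a topology \<Rightarrow> bool" where
  "bob_wins_BM_omega X \<equiv> BM_bob_has_winning_strategy X countable"

end

(*
  Under CH there is a Luzin set L of reals: it meets every closed nowhere dense set in a countable
  set and every non-empty open set in an uncountable one.

  The subspace L is second countable and Baire. Bob wins BM_omega(L) by always playing all basic
  open sets inside the union of Alice's last answers: these unions are open, each is dense in the
  previous one, and the Baire property keeps their intersection non-empty.

  In BM_fin(L), fix a strategy of Bob. For every set alpha of naturals Alice answers in inning n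
  each of Bob's finitely many sets by a short interval to the right or to the left of a point of it,
  according to whether n is in alpha; all these intervals avoid the n-th rational, and right ones
  are disjoint from left ones. If the strategy were winning, each play would leave a point y_alpha,
  the y_alpha would be pairwise distinct, and all of them would lie in the intersection over n of
  the (finite) unions of the intervals of inning n: a closed set without rationals, hence nowhere
  dense, meeting L uncountably.
*)

theory Submission
  imports Defs
begin

section \<open>Winning strategies of Bob and homeomorphisms\<close>

lemma BM_bob_legal_image:
  assumes "homeomorphic_map X Y f" "BM_bob_legal X P U \<A>"
    "\<And>\<A>. P \<A> \<Longrightarrow> Q ((`) f ` \<A>)"
  shows "BM_bob_legal Y Q (f ` U) ((`) f ` \<A>)"
  using assms homeomorphic_map_openness_eq[OF assms(1)] unfolding BM_bob_legal_def by blast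

lemma BM_alice_legal_image:
  assumes g: "homeomorphic_map Y X g" and fg: "\<And>y. y \<in> topspace Y \<Longrightarrow> f (g y) = y"
    and legal: "BM_alice_legal Y ((`) f ` \<A>) h" and open_\<A>: "\<And>A. A \<in> \<A> \<Longrightarrow> openin X A"
    and gf: "\<And>x. x \<in> topspace X \<Longrightarrow> g (f x) = x"
  shows "BM_alice_legal X \<A> (\<lambda>A. g ` h (f ` A))"
  unfolding BM_alice_legal_def
proof (intro ballI conjI)
  fix A assume A: "A \<in> \<A>"
  have "openin Y (h (f ` A))" "h (f ` A) \<noteq> {}" "h (f ` A) \<subseteq> f ` A"
    using legal A unfolding BM_alice_legal_def by auto
  moreover have "g ` f ` A = A"
    using gf openin_subset[OF open_\<A>[OF A]] by (force simp: image_image)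
  ultimately show "openin X (g ` h (f ` A))" "g ` h (f ` A) \<noteq> {}" "g ` h (f ` A) \<subseteq> A"
    using homeomorphic_map_openness_eq[OF g] by (auto dest: openin_subset)
qed

lemma BM_bob_move_openin:
  assumes "BM_bob_winning_strategy X P \<sigma>" "openin X A0" "A0 \<noteq> {}"
    and "\<forall>j<k. BM_alice_legal X (BM_bob_move \<sigma> A0 f j) (f j)" "B \<in> BM_bob_move \<sigma> A0 f k"
  shows "openin X B"
proof (cases k)
  case 0
  then show ?thesis using assms unfolding BM_bob_winning_strategy_def BM_bob_legal_def by blast
next
  case (Suc m)
  then have "BM_bob_legal X P (\<Union> (f m ` BM_bob_move \<sigma> A0 f m)) (BM_bob_move \<sigma> A0 f k)"
    using assms unfolding BM_bob_winning_strategy_def by (metis less_Suc_eq_le)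
  then show ?thesis using assms(5) unfolding BM_bob_legal_def by blast
qed

locale BM_homeomorphic_transfer =
  fixes X :: "'a topology" and Y :: "'b topology" and f :: "'a \<Rightarrow> 'b" and g :: "'b \<Rightarrow> 'a"
    and P :: "'a set set \<Rightarrow> bool" and \<sigma> :: "'a set \<Rightarrow> ('a set \<Rightarrow> 'a set) list \<Rightarrow> 'a set set"
  assumes f: "homeomorphic_map X Y f" and g: "homeomorphic_map Y X g"
    and gf: "\<And>x. x \<in> topspace X \<Longrightarrow> g (f x) = x" and fg: "\<And>y. y \<in> topspace Y \<Longrightarrow> f (g y) = y"
    and winning: "BM_bob_winning_strategy X P \<sigma>"
begin

definition pull :: "(nat \<Rightarrow> 'b set \<Rightarrow> 'b set) \<Rightarrow> nat \<Rightarrow> 'a set \<Rightarrow> 'a set" where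
  "pull h k A = g ` h k (f ` A)"

definition strategy :: "'b set \<Rightarrow> ('b set \<Rightarrow> 'b set) list \<Rightarrow> 'b set set" where
  "strategy B0 hs = (`) f ` \<sigma> (g ` B0) (map (\<lambda>h A. g ` h (f ` A)) hs)"

lemma BM_bob_move_strategy: "BM_bob_move strategy B0 h n = (`) f ` BM_bob_move \<sigma> (g ` B0) (pull h) n"
  unfolding BM_bob_move_def strategy_def pull_def by (simp add: comp_def)

lemma image_fg: "B \<subseteq> topspace Y \<Longrightarrow> f ` g ` B = B"
  using fg by (force simp: image_image)

lemma g_image_open_nonempty:
  assumes "openin Y B0" "B0 \<noteq> {}"
  shows "openin X (g ` B0) \<and> g ` B0 \<noteq> {}"
  using assms homeomorphic_map_openness_eq[OF g] by auto

lemma BM_alice_legal_pull_step: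
  assumes B0: "openin Y B0" "B0 \<noteq> {}"
    and alice: "BM_alice_legal Y (BM_bob_move strategy B0 h k) (h k)"
    and before: "\<forall>j<k. BM_alice_legal X (BM_bob_move \<sigma> (g ` B0) (pull h) j) (pull h j)"
  shows "BM_alice_legal X (BM_bob_move \<sigma> (g ` B0) (pull h) k) (pull h k)"
proof -
  have "openin X A" if "A \<in> BM_bob_move \<sigma> (g ` B0) (pull h) k" for A
    using BM_bob_move_openin[OF winning _ _ before that] g_image_open_nonempty[OF B0] by blast
  then have "BM_alice_legal X (BM_bob_move \<sigma> (g ` B0) (pull h) k) (\<lambda>A. g ` h k (f ` A))"
    using BM_alice_legal_image[OF g fg alice[unfolded BM_bob_move_strategy] _ gf] by blast
  moreover have "pull h k = (\<lambda>A. g ` h k (f ` A))"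
    unfolding pull_def by simp
  ultimately show ?thesis
    by simp
qed

lemma BM_alice_legal_pull:
  assumes B0: "openin Y B0" "B0 \<noteq> {}"
    and "\<forall>j\<le>k. BM_alice_legal Y (BM_bob_move strategy B0 h j) (h j)"
  shows "\<forall>j\<le>k. BM_alice_legal X (BM_bob_move \<sigma> (g ` B0) (pull h) j) (pull h j)"
  using assms(3)
proof (induction k)
  case 0
  then show ?case
    using BM_alice_legal_pull_step[OF B0] by simp
next
  case (Suc k)
  then have "\<forall>j<Suc k. BM_alice_legal X (BM_bob_move \<sigma> (g ` B0) (pull h) j) (pull h j)"
    by (simp add: less_Suc_eq_le)
  moreover have "BM_alice_legal Y (BM_bob_move strategy B0 h (Suc k)) (h (Suc k))"
    using Suc.prems by blast
  ultimately show ?case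
    using BM_alice_legal_pull_step[OF B0] by (auto simp: le_Suc_eq)
qed

lemma Union_pull:
  assumes "BM_alice_legal Y (BM_bob_move strategy B0 h n) (h n)"
  shows "f ` \<Union> (pull h n ` BM_bob_move \<sigma> (g ` B0) (pull h) n) = \<Union> (h n ` BM_bob_move strategy B0 h n)"
proof -
  let ?M = "BM_bob_move \<sigma> (g ` B0) (pull h) n"
  have "h n (f ` A) \<subseteq> topspace Y" if "A \<in> ?M" for A
    using assms that unfolding BM_alice_legal_def BM_bob_move_strategy by (meson image_eqI openin_subset)
  then have "f ` \<Union> (pull h n ` ?M) = (\<Union>A\<in>?M. h n (f ` A))"
    unfolding pull_def image_UN using image_fg by simp
  then show ?thesis
    unfolding BM_bob_move_strategy by (simp add: image_image)
qed

lemma BM_bob_winning_strategy_transfer: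
  assumes P_Q: "\<And>\<A>. P \<A> \<Longrightarrow> Q ((`) f ` \<A>)"
  shows "BM_bob_winning_strategy Y Q strategy"
  unfolding BM_bob_winning_strategy_def
proof (intro allI impI conjI)
  fix B0 h assume "openin Y B0 \<and> B0 \<noteq> {}"
  then have B0: "openin Y B0" "B0 \<noteq> {}"
    by blast+
  let ?M = "BM_bob_move \<sigma> (g ` B0) (pull h)"
  note win = winning[unfolded BM_bob_winning_strategy_def, rule_format, OF g_image_open_nonempty[OF B0], of "pull h"]
  have "BM_bob_legal X P (g ` B0) (?M 0)"
    using win by (rule conjunct1)
  from BM_bob_legal_image[where Q = Q, OF f this P_Q]
  show "BM_bob_legal Y Q B0 (BM_bob_move strategy B0 h 0)"
    unfolding BM_bob_move_strategy image_fg[OF openin_subset[OF B0(1)]] .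
  show "BM_bob_legal Y Q (\<Union> (h n ` BM_bob_move strategy B0 h n)) (BM_bob_move strategy B0 h (Suc n))"
    if alice: "\<forall>k\<le>n. BM_alice_legal Y (BM_bob_move strategy B0 h k) (h k)" for n
  proof -
    have "BM_bob_legal X P (\<Union> (pull h n ` ?M n)) (?M (Suc n))"
      using win[THEN conjunct2, THEN conjunct1, THEN spec, THEN mp, OF BM_alice_legal_pull[OF B0 alice]] .
    from BM_bob_legal_image[where Q = Q, OF f this P_Q]
    show ?thesis
      unfolding Union_pull[OF alice[rule_format, OF order_refl]] BM_bob_move_strategy[of B0 h "Suc n"] .
  qed
  show "(\<Inter>n. \<Union> (BM_bob_move strategy B0 h n)) \<noteq> {}"
    if alice: "\<forall>n. BM_alice_legal Y (BM_bob_move strategy B0 h n) (h n)"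
  proof -
    have "\<forall>n. BM_alice_legal X (?M n) (pull h n)"
      using BM_alice_legal_pull[OF B0] alice by blast
    then obtain x where "\<And>n. x \<in> \<Union> (?M n)"
      using win[THEN conjunct2, THEN conjunct2, THEN mp] by blast
    then have "\<And>n. f x \<in> \<Union> (BM_bob_move strategy B0 h n)"
      unfolding BM_bob_move_strategy by blast
    then show ?thesis
      by blast
  qed
qed

end

lemma BM_bob_has_winning_strategy_homeomorphic:
  assumes "X homeomorphic_space Y" and P_Q: "\<And>\<A> (\<phi> :: 'a set \<Rightarrow> 'b set). P \<A> \<Longrightarrow> Q (\<phi> ` \<A>)"
    and "BM_bob_has_winning_strategy X P"
  shows "BM_bob_has_winning_strategy Y Q"
proof -
  obtain f g where "homeomorphic_maps X Y f g"
    using assms(1) unfolding homeomorphic_space_def by blast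
  moreover obtain \<sigma> where "BM_bob_winning_strategy X P \<sigma>"
    using assms(3) unfolding BM_bob_has_winning_strategy_def by blast
  ultimately interpret BM_homeomorphic_transfer X Y f g P \<sigma>
    by unfold_locales (auto simp: homeomorphic_maps_map)
  have "BM_bob_winning_strategy Y Q strategy"
    by (rule BM_bob_winning_strategy_transfer) (rule P_Q)
  then show ?thesis
    unfolding BM_bob_has_winning_strategy_def by blast
qed

lemma homeomorphic_space_pullback_topology:
  assumes "\<And>x. x \<in> topspace X \<Longrightarrow> r (e x) = x"
  shows "X homeomorphic_space pullback_topology (e ` topspace X) r X"
proof -
  let ?Y = "pullback_topology (e ` topspace X) r X"
  have "continuous_map X X (r \<circ> e)"
    using assms by (simp add: continuous_map_eq[OF continuous_map_id])
  then have "continuous_map X ?Y e"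
    by (rule continuous_map_pullback') auto
  moreover have "continuous_map ?Y X r"
    using continuous_map_pullback[OF continuous_map_id] by simp
  moreover have "e (r y) = y" if "y \<in> topspace ?Y" for y
    using that assms unfolding topspace_pullback_topology by auto
  ultimately show ?thesis
    unfolding homeomorphic_space_def homeomorphic_maps_def using assms by blast
qed

section \<open>Baire spaces and the game with countable moves\<close>

definition Baire_space :: "'a topology \<Rightarrow> bool" where
  "Baire_space X \<longleftrightarrow>
     (\<forall>\<G>. countable \<G> \<and> (\<forall>T\<in>\<G>. openin X T \<and> X closure_of T = topspace X)
        \<longrightarrow> X closure_of \<Inter>\<G> = topspace X)"

lemma Baire_spaceD:
  assumes "Baire_space X" "countable \<G>" "\<And>T. T \<in> \<G> \<Longrightarrow> openin X T"
    "\<And>T. T \<in> \<G> \<Longrightarrow> X closure_of T = topspace X"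
  shows "X closure_of \<Inter>\<G> = topspace X"
  using assms unfolding Baire_space_def by blast

lemma open_dense_Un_outside_closure:
  assumes "openin X U" "openin X D"
    and dense: "\<And>V. openin X V \<Longrightarrow> V \<noteq> {} \<Longrightarrow> V \<subseteq> U \<Longrightarrow> V \<inter> D \<noteq> {}"
  shows "openin X (D \<union> (topspace X - X closure_of U))"
    and "X closure_of (D \<union> (topspace X - X closure_of U)) = topspace X"
proof -
  show "openin X (D \<union> (topspace X - X closure_of U))"
    by (intro openin_Un openin_diff openin_topspace closedin_closure_of assms(2))
  show "X closure_of (D \<union> (topspace X - X closure_of U)) = topspace X"
    unfolding dense_intersects_open
  proof (intro allI impI)
    fix V assume V: "openin X V \<and> V \<noteq> {}"
    show "(D \<union> (topspace X - X closure_of U)) \<inter> V \<noteq> {}"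
    proof (cases "V \<subseteq> X closure_of U")
      case True
      then have "V \<inter> U \<noteq> {}"
        using V openin_Int_closure_of_eq_empty[of X V U] by blast
      moreover have "openin X (V \<inter> U)"
        using V assms(1) by (simp add: openin_Int)
      ultimately have "(V \<inter> U) \<inter> D \<noteq> {}"
        using dense by blast
      then show ?thesis by blast
    next
      case False
      then show ?thesis using V openin_subset by blast
    qed
  qed
qed

lemma Baire_space_open_Int_INT:
  fixes D :: "nat \<Rightarrow> 'a set"
  assumes "Baire_space X" "openin X U" "U \<noteq> {}" "\<And>n. openin X (D n)"
    and dense: "\<And>n V. openin X V \<Longrightarrow> V \<noteq> {} \<Longrightarrow> V \<subseteq> U \<Longrightarrow> V \<inter> D n \<noteq> {}"
  shows "U \<inter> (\<Inter>n. D n) \<noteq> {}"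
proof -
  define T where "T n = D n \<union> (topspace X - X closure_of U)" for n
  note T = open_dense_Un_outside_closure[OF assms(2,4) dense, folded T_def]
  have "X closure_of \<Inter>(range T) = topspace X"
    by (rule Baire_spaceD[OF assms(1)]) (use T in auto)
  then have "\<Inter>(range T) \<inter> U \<noteq> {}"
    using assms(2,3) unfolding dense_intersects_open by blast
  then obtain x where x: "x \<in> U" "\<And>n. x \<in> T n"
    by blast
  have "x \<in> X closure_of U"
    using closure_of_subset[OF openin_subset[OF assms(2)]] x(1) by blast
  then have "x \<in> D n" for n
    using x(2)[of n] unfolding T_def by blast
  then show ?thesis
    using x(1) by blast
qed

definition basic_cover :: "'a set set \<Rightarrow> 'a set \<Rightarrow> 'a set set" where
  "basic_cover \<B> U = {B \<in> \<B>. B \<noteq> {} \<and> B \<subseteq> U}"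

primrec cover_moves ::
  "'a set set \<Rightarrow> 'a set \<Rightarrow> (nat \<Rightarrow> 'a set \<Rightarrow> 'a set) \<Rightarrow> nat \<Rightarrow> 'a set set" where
  "cover_moves \<B> A0 f 0 = basic_cover \<B> A0"
| "cover_moves \<B> A0 f (Suc n) = basic_cover \<B> (\<Union> (f n ` cover_moves \<B> A0 f n))"

definition cover_strategy :: "'a set set \<Rightarrow> 'a set \<Rightarrow> ('a set \<Rightarrow> 'a set) list \<Rightarrow> 'a set set" where
  "cover_strategy \<B> A0 fs = cover_moves \<B> A0 ((!) fs) (length fs)"

lemma BM_bob_move_cover_strategy: "BM_bob_move (cover_strategy \<B>) A0 f n = cover_moves \<B> A0 f n"
proof -
  have "cover_moves \<B> A0 ((!) (map f [0..<n])) m = cover_moves \<B> A0 f m" if "m \<le> n" for m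
    using that by (induction m) auto
  then show ?thesis
    unfolding BM_bob_move_def cover_strategy_def by simp
qed

locale countable_base =
  fixes X :: "'a topology" and \<B> :: "'a set set"
  assumes countable_base: "countable \<B>" and openin_base: "\<And>B. B \<in> \<B> \<Longrightarrow> openin X B"
    and base: "\<And>U x. openin X U \<Longrightarrow> x \<in> U \<Longrightarrow> \<exists>B\<in>\<B>. x \<in> B \<and> B \<subseteq> U"
begin

lemma Union_basic_cover: "openin X U \<Longrightarrow> \<Union> (basic_cover \<B> U) = U"
  unfolding basic_cover_def using base by blast

lemma BM_bob_legal_basic_cover: "BM_bob_legal X countable U (basic_cover \<B> U)"
  unfolding BM_bob_legal_def basic_cover_def using countable_base openin_base
  by (auto intro: countable_subset)

lemma basic_cover_answers_dense:
  assumes "BM_alice_legal X (basic_cover \<B> U) f" "openin X V" "V \<noteq> {}" "V \<subseteq> U"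
  shows "V \<inter> \<Union> (f ` basic_cover \<B> U) \<noteq> {}"
proof -
  obtain x where "x \<in> V" using assms(3) by blast
  then obtain B where B: "B \<in> \<B>" "x \<in> B" "B \<subseteq> V"
    using base assms(2) by blast
  then have "B \<in> basic_cover \<B> U"
    unfolding basic_cover_def using assms(4) by blast
  then have "f B \<noteq> {}" "f B \<subseteq> B" "f B \<subseteq> \<Union> (f ` basic_cover \<B> U)"
    using assms(1) unfolding BM_alice_legal_def by auto
  then show ?thesis using B(3) by blast
qed

context
  fixes A0 :: "'a set" and f :: "nat \<Rightarrow> 'a set \<Rightarrow> 'a set"
  assumes A0: "openin X A0" "A0 \<noteq> {}"
    and alice: "\<And>n. BM_alice_legal X (cover_moves \<B> A0 f n) (f n)"
begin

lemma Union_cover_moves_Suc: "\<Union> (cover_moves \<B> A0 f (Suc n)) = \<Union> (f n ` cover_moves \<B> A0 f n)"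
proof -
  have "openin X (\<Union> (f n ` cover_moves \<B> A0 f n))"
    using alice unfolding BM_alice_legal_def by blast
  then show ?thesis
    using Union_basic_cover by simp
qed

lemma cover_moves_eq_basic_cover:
  "openin X (\<Union> (cover_moves \<B> A0 f n)) \<and> cover_moves \<B> A0 f n = basic_cover \<B> (\<Union> (cover_moves \<B> A0 f n))"
proof (cases n)
  case 0
  then show ?thesis using A0 Union_basic_cover by simp
next
  case (Suc m)
  have "openin X (\<Union> (f m ` cover_moves \<B> A0 f m))"
    using alice unfolding BM_alice_legal_def by blast
  then show ?thesis using Suc Union_cover_moves_Suc by simp
qed

lemma cover_moves_dense:
  assumes "openin X V" "V \<noteq> {}" "V \<subseteq> A0"
  shows "V \<inter> \<Union> (cover_moves \<B> A0 f n) \<noteq> {}"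
  using assms
proof (induction n arbitrary: V)
  case 0
  then show ?case using A0 Union_basic_cover by (simp add: Int_absorb2)
next
  case (Suc n)
  let ?D = "\<Union> (cover_moves \<B> A0 f n)"
  have legal: "BM_alice_legal X (basic_cover \<B> ?D) (f n)"
    using alice[of n] cover_moves_eq_basic_cover[of n] by argo
  have "openin X (V \<inter> ?D)"
    using Suc.prems(1) cover_moves_eq_basic_cover[of n] by (simp add: openin_Int)
  then have "(V \<inter> ?D) \<inter> \<Union> (f n ` basic_cover \<B> ?D) \<noteq> {}"
    using basic_cover_answers_dense[OF legal] Suc.IH[OF Suc.prems] by blast
  moreover have "\<Union> (cover_moves \<B> A0 f (Suc n)) = \<Union> (f n ` basic_cover \<B> ?D)"
    using Union_cover_moves_Suc cover_moves_eq_basic_cover[of n] by simp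
  ultimately show ?case by blast
qed

end

lemma BM_bob_winning_strategy_cover:
  assumes "Baire_space X"
  shows "BM_bob_winning_strategy X countable (cover_strategy \<B>)"
  unfolding BM_bob_winning_strategy_def BM_bob_move_cover_strategy
proof (intro allI impI conjI)
  fix A0 f assume "openin X A0 \<and> A0 \<noteq> {}"
  then have A0: "openin X A0" "A0 \<noteq> {}"
    by blast+
  show "BM_bob_legal X countable A0 (cover_moves \<B> A0 f 0)"
    "\<And>n. BM_bob_legal X countable (\<Union> (f n ` cover_moves \<B> A0 f n)) (cover_moves \<B> A0 f (Suc n))"
    using BM_bob_legal_basic_cover by simp_all
  assume "\<forall>n. BM_alice_legal X (cover_moves \<B> A0 f n) (f n)"
  then have alice: "\<And>n. BM_alice_legal X (cover_moves \<B> A0 f n) (f n)"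
    by blast
  have "A0 \<inter> (\<Inter>n. \<Union> (cover_moves \<B> A0 f n)) \<noteq> {}"
  proof (rule Baire_space_open_Int_INT[OF assms A0])
    show "openin X (\<Union> (cover_moves \<B> A0 f n))" for n
      using cover_moves_eq_basic_cover[OF A0 alice] by blast
    show "V \<inter> \<Union> (cover_moves \<B> A0 f n) \<noteq> {}" if "openin X V" "V \<noteq> {}" "V \<subseteq> A0" for n V
      using cover_moves_dense[OF A0 alice that] .
  qed
  then show "(\<Inter>n. \<Union> (cover_moves \<B> A0 f n)) \<noteq> {}"
    by blast
qed

end

theorem second_countable_Baire_imp_bob_wins_BM_omega:
  assumes "second_countable X" "Baire_space X"
  shows "bob_wins_BM_omega X"
proof -
  obtain \<B> where "countable \<B>" "\<forall>V\<in>\<B>. openin X V"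
    "\<forall>U x. openin X U \<and> x \<in> U \<longrightarrow> (\<exists>V\<in>\<B>. x \<in> V \<and> V \<subseteq> U)"
    using assms(1) unfolding second_countable_def by blast
  then interpret countable_base X \<B>
    by unfold_locales auto
  show ?thesis
    unfolding BM_bob_has_winning_strategy_def using BM_bob_winning_strategy_cover[OF assms(2)] by blast
qed

lemma second_countable_euclidean: "second_countable (euclidean :: 'a::second_countable_topology topology)"
proof -
  obtain \<B> :: "'a set set" where "countable \<B>" "\<And>C. C \<in> \<B> \<Longrightarrow> open C"
    "\<And>S. open S \<Longrightarrow> \<exists>U. U \<subseteq> \<B> \<and> S = \<Union>U"
    by (rule univ_second_countable) blast
  then show ?thesis
    unfolding second_countable_def by (intro exI[of _ \<B>]) (metis UnionE Sup_upper open_openin subsetD)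
qed

section \<open>A Luzin set under the continuum hypothesis\<close>

lemma countable_underS_card_of_real:
  assumes "continuum_hypothesis"
  shows "countable (underS (card_of (UNIV :: real set)) a)"
proof -
  have "(card_of (underS (card_of (UNIV :: real set)) a), card_of (UNIV :: real set)) \<in> ordLess"
    using card_of_underS[OF card_of_Card_order, of a] by (simp add: Field_card_of)
  then have "\<not> underS (card_of (UNIV :: real set)) a \<approx> (UNIV :: real set)"
    unfolding eqpoll_iff_card_of_ordIso using not_ordLess_ordIso by blast
  then show ?thesis
    using assms unfolding continuum_hypothesis_def by blast
qed

lemma not_underS_card_of_imp_under:
  fixes a c :: 'a
  assumes "c \<notin> underS (card_of (UNIV :: 'a set)) a"
  shows "a \<in> under (card_of (UNIV :: 'a set)) c"
proof -
  let ?W = "card_of (UNIV :: 'a set)"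
  have "total_on UNIV ?W" "refl_on UNIV ?W"
    using card_of_Well_order[of "UNIV :: 'a set"]
    unfolding well_order_on_def linear_order_on_def partial_order_on_def preorder_on_def
    by (simp_all add: Field_card_of)
  then have "(a, c) \<in> ?W"
    using assms unfolding underS_def total_on_def refl_on_def by (cases "a = c") auto
  then show ?thesis
    unfolding under_def by simp
qed

lemma countable_under_card_of_real:
  assumes "continuum_hypothesis"
  shows "countable (under (card_of (UNIV :: real set)) a)"
proof -
  have "under (card_of (UNIV :: real set)) a \<subseteq> insert a (underS (card_of (UNIV :: real set)) a)"
    unfolding under_def underS_def by blast
  then show ?thesis
    using countable_underS_card_of_real[OF assms] by (meson countable_insert countable_subset)
qed

lemma countable_subset_underS_card_of_real:
  assumes "continuum_hypothesis" "countable C" "uncountable (Z :: real set)"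
  shows "\<exists>a\<in>Z. C \<subseteq> underS (card_of (UNIV :: real set)) a"
proof (rule ccontr)
  assume no_bound: "\<not> ?thesis"
  have "Z \<subseteq> (\<Union>c\<in>C. under (card_of (UNIV :: real set)) c)"
  proof
    fix z assume "z \<in> Z"
    then obtain c where c: "c \<in> C" "c \<notin> underS (card_of (UNIV :: real set)) z"
      using no_bound by blast
    show "z \<in> (\<Union>c\<in>C. under (card_of (UNIV :: real set)) c)"
      using c(1) not_underS_card_of_imp_under[OF c(2)] by (rule UN_I)
  qed
  moreover have "countable (\<Union>c\<in>C. under (card_of (UNIV :: real set)) c)"
    using assms(2) countable_under_card_of_real[OF assms(1)] by blast
  ultimately show False
    using assms(3) countable_subset by blast
qed

lemma open_not_subset_countable_Union_nowhere_dense: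
  fixes U :: "real set"
  assumes "open U" "U \<noteq> {}" "countable \<G>" "\<And>F. F \<in> \<G> \<Longrightarrow> closed F \<and> interior F = {}"
  shows "\<not> U \<subseteq> \<Union>\<G>"
proof
  assume "U \<subseteq> \<Union>\<G>"
  have "euclidean interior_of \<Union>\<G> = {}"
    by (rule Baire_category_alt) (use assms completely_metrizable_space_euclidean in auto)
  then have "interior (\<Union>\<G>) = {}"
    by simp
  with \<open>U \<subseteq> \<Union>\<G>\<close> assms(1,2) show False
    by (metis interior_maximal subset_empty)
qed

lemma closed_nowhere_dense_sets_indexed_by_reals:
  "\<exists>F :: real \<Rightarrow> real set. range F = {S. closed S \<and> interior S = {}}"
proof -
  obtain B :: "nat \<Rightarrow> real set" where B: "\<And>S. open S \<Longrightarrow> \<exists>k. S = \<Union>{B n |n. n \<in> k}"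
    by (rule univ_second_countable_sequence) blast
  obtain h :: "real \<Rightarrow> nat set" where h: "surj h"
    using nat_sets_eqpoll_reals unfolding eqpoll_def by (metis bij_betw_inv bij_is_surj)
  define G where "G r = - \<Union>{B n |n. n \<in> h r}" for r
  define F where "F r = (if closed (G r) \<and> interior (G r) = {} then G r else {})" for r
  have "S \<in> range F" if S: "closed S" "interior S = {}" for S
  proof -
    obtain k where "- S = \<Union>{B n |n. n \<in> k}"
      using B[of "- S"] S(1) by (auto simp: open_Compl)
    moreover obtain r where "h r = k"
      using h by (metis surjD)
    ultimately have "G r = S"
      unfolding G_def by (metis double_complement)
    then have "F r = S"
      unfolding F_def using S by simp
    then show ?thesis
      by blast
  qed
  moreover have "closed (F r) \<and> interior (F r) = {}" for r
    unfolding F_def by simp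
  ultimately show ?thesis by blast
qed

lemma open_sets_uncountably_indexed_by_reals:
  "\<exists>\<Omega> :: real \<Rightarrow> real set. (\<forall>r. open (\<Omega> r) \<and> \<Omega> r \<noteq> {}) \<and>
     (\<forall>U. open U \<and> U \<noteq> {} \<longrightarrow> uncountable {r. \<Omega> r \<subseteq> U})"
proof -
  obtain B :: "nat \<Rightarrow> real set" where B: "\<And>n. open (B n)" "\<And>S. open S \<Longrightarrow> \<exists>k. S = \<Union>{B n |n. n \<in> k}"
    by (rule univ_second_countable_sequence) blast
  define \<Omega> where "\<Omega> r = (let B' = B (nat \<lfloor>\<bar>r\<bar>\<rfloor>) in if B' = {} then UNIV else B')" for r :: real
  have "uncountable {r. \<Omega> r \<subseteq> U}" if U: "open U" "U \<noteq> {}" for U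
  proof -
    obtain n where n: "B n \<noteq> {}" "B n \<subseteq> U"
      using B(2)[OF U(1)] U(2) by blast
    have "{real n..<real n + 1} \<subseteq> {r. \<Omega> r \<subseteq> U}"
    proof
      fix r assume "r \<in> {real n..<real n + 1}"
      then have "\<lfloor>\<bar>r\<bar>\<rfloor> = int n" by (simp add: floor_eq_iff)
      then have "nat \<lfloor>\<bar>r\<bar>\<rfloor> = n" by simp
      then show "r \<in> {r. \<Omega> r \<subseteq> U}" unfolding \<Omega>_def using n by simp
    qed
    moreover have "uncountable {real n..<real n + 1}"
      by (simp add: uncountable_half_open_interval_1)
    ultimately show ?thesis
      using countable_subset by blast
  qed
  moreover have "open (\<Omega> r) \<and> \<Omega> r \<noteq> {}" for r
    unfolding \<Omega>_def Let_def using B(1) by simp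
  ultimately show ?thesis by blast
qed

\<comment> \<open>Stronger than the usual notion, which only asks L to be uncountable.\<close>
definition Luzin_set :: "real set \<Rightarrow> bool" where
  "Luzin_set L \<longleftrightarrow>
     (\<forall>F. closed F \<and> interior F = {} \<longrightarrow> countable (L \<inter> F)) \<and>
     (\<forall>U. open U \<and> U \<noteq> {} \<longrightarrow> uncountable (L \<inter> U))"

locale Luzin_diagonal =
  fixes F \<Omega> :: "real \<Rightarrow> real set" and x :: "real \<Rightarrow> real"
  assumes CH: "continuum_hypothesis"
    and range_F: "range F = {S. closed S \<and> interior S = {}}"
    and uncountable_\<Omega>: "\<And>U. open U \<Longrightarrow> U \<noteq> {} \<Longrightarrow> uncountable {r. \<Omega> r \<subseteq> U}"
    and x_in_\<Omega>: "\<And>r. x r \<in> \<Omega> r"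
    and x_avoids: "\<And>r t. t \<in> underS (card_of (UNIV :: real set)) r \<Longrightarrow> x r \<notin> F t"
begin

lemma countable_Int_nowhere_dense:
  assumes "closed S" "interior S = {}"
  shows "countable (range x \<inter> S)"
proof -
  let ?W = "card_of (UNIV :: real set)"
  have "S \<in> range F"
    using range_F assms by simp
  then obtain t where t: "F t = S"
    by blast
  have "range x \<inter> S \<subseteq> x ` under ?W t"
  proof
    fix y assume "y \<in> range x \<inter> S"
    then obtain r where r: "y = x r" "x r \<in> F t"
      using t by blast
    then have "t \<notin> underS ?W r"
      using x_avoids by blast
    then have "r \<in> under ?W t"
      by (rule not_underS_card_of_imp_under)
    then show "y \<in> x ` under ?W t"
      using r(1) by blast
  qed
  then show ?thesis
    by (rule countable_subset[OF _ countable_image[OF countable_under_card_of_real[OF CH]]])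
qed

\<comment> \<open>Code each point of a countable set by its singleton; at a stage beyond all these codes the
  chosen point would have to avoid its own singleton.\<close>
lemma uncountable_Int_open:
  assumes U: "open U" "U \<noteq> {}"
  shows "uncountable (range x \<inter> U)"
proof
  let ?W = "card_of (UNIV :: real set)"
  assume countable: "countable (range x \<inter> U)"
  define code where "code y = inv F {y}" for y
  have "{y} \<in> range F" for y
    unfolding range_F by (simp add: interior_singleton)
  then have code: "F (code y) = {y}" for y
    unfolding code_def by (rule f_inv_into_f)
  obtain a where a: "\<Omega> a \<subseteq> U" "code ` (range x \<inter> U) \<subseteq> underS ?W a"
    using countable_subset_underS_card_of_real[OF CH countable_image[OF countable] uncountable_\<Omega>[OF U]]
    by blast
  then have "code (x a) \<in> underS ?W a"
    using x_in_\<Omega> by blast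
  then show False
    using x_avoids code by blast
qed

lemma Luzin_set_range: "Luzin_set (range x)"
  unfolding Luzin_set_def using countable_Int_nowhere_dense uncountable_Int_open by blast

end

theorem continuum_hypothesis_imp_Luzin_set:
  assumes CH: "continuum_hypothesis"
  shows "\<exists>L. Luzin_set L"
proof -
  obtain F :: "real \<Rightarrow> real set" where F: "range F = {S. closed S \<and> interior S = {}}"
    using closed_nowhere_dense_sets_indexed_by_reals by blast
  obtain \<Omega> :: "real \<Rightarrow> real set" where \<Omega>: "\<And>r. open (\<Omega> r) \<and> \<Omega> r \<noteq> {}"
    "\<And>U. open U \<Longrightarrow> U \<noteq> {} \<Longrightarrow> uncountable {r. \<Omega> r \<subseteq> U}"
    using open_sets_uncountably_indexed_by_reals by blast
  have "\<exists>y\<in>\<Omega> r. \<forall>t\<in>underS (card_of (UNIV :: real set)) r. y \<notin> F t" for r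
  proof -
    have "\<not> \<Omega> r \<subseteq> \<Union> (F ` underS (card_of (UNIV :: real set)) r)"
      using \<Omega>(1) countable_underS_card_of_real[OF CH] F
      by (intro open_not_subset_countable_Union_nowhere_dense) auto
    then show ?thesis by blast
  qed
  then obtain x where "\<And>r. x r \<in> \<Omega> r" "\<And>r t. t \<in> underS (card_of (UNIV :: real set)) r \<Longrightarrow> x r \<notin> F t"
    by metis
  then interpret Luzin_diagonal F \<Omega> x
    using CH F \<Omega>(2) by unfold_locales
  show ?thesis
    using Luzin_set_range by blast
qed

lemma Luzin_set_Int_open_nonempty:
  "Luzin_set L \<Longrightarrow> open U \<Longrightarrow> U \<noteq> {} \<Longrightarrow> L \<inter> U \<noteq> {}"
  unfolding Luzin_set_def by (metis countable_empty)

lemma Luzin_set_dense: "Luzin_set L \<Longrightarrow> closure L = UNIV"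
  using Luzin_set_Int_open_nonempty[of L "- closure L"] open_Int_closure_eq_empty[of "- closure L" L]
  by auto

lemma Luzin_set_countable_diff_dense_open:
  assumes L: "Luzin_set L" and "open U" and dense: "top_of_set L closure_of (L \<inter> U) = topspace (top_of_set L)"
  shows "countable (L - U)"
proof -
  have "interior (- U) = {}"
  proof (rule ccontr)
    assume "interior (- U) \<noteq> {}"
    then have "L \<inter> interior (- U) \<noteq> {}"
      using Luzin_set_Int_open_nonempty[OF L] by blast
    moreover have "openin (top_of_set L) (L \<inter> interior (- U))"
      unfolding openin_open by blast
    ultimately have "(L \<inter> U) \<inter> (L \<inter> interior (- U)) \<noteq> {}"
      using dense[unfolded dense_intersects_open, rule_format, of "L \<inter> interior (- U)"] by blast
    then show False
      using interior_subset by blast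
  qed
  moreover have "closed (- U)"
    using \<open>open U\<close> by (simp add: closed_Compl)
  ultimately have "countable (L \<inter> - U)"
    using L unfolding Luzin_set_def by blast
  then show ?thesis
    by (simp add: Diff_eq)
qed

lemma Luzin_set_Baire_space:
  assumes L: "Luzin_set L"
  shows "Baire_space (top_of_set L)"
  unfolding Baire_space_def
proof (intro allI impI)
  fix \<G> assume \<G>: "countable \<G> \<and> (\<forall>T\<in>\<G>. openin (top_of_set L) T \<and> top_of_set L closure_of T = topspace (top_of_set L))"
  then obtain Op where Op: "\<And>T. T \<in> \<G> \<Longrightarrow> open (Op T) \<and> T = L \<inter> Op T"
    unfolding openin_open by metis
  have "countable (L - Op T)" if "T \<in> \<G>" for T
    using Luzin_set_countable_diff_dense_open[OF L] Op[OF that] \<G> that by auto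
  then have small: "countable (\<Union>T\<in>\<G>. L - Op T)"
    using \<G> by (intro countable_UN) auto
  show "top_of_set L closure_of \<Inter>\<G> = topspace (top_of_set L)"
    unfolding dense_intersects_open
  proof (intro allI impI)
    fix W assume W: "openin (top_of_set L) W \<and> W \<noteq> {}"
    then obtain V where V: "open V" "W = L \<inter> V"
      unfolding openin_open by blast
    moreover have "V \<noteq> {}"
      using W V by blast
    ultimately have "uncountable (L \<inter> V)"
      using L unfolding Luzin_set_def by blast
    then have "\<not> L \<inter> V \<subseteq> (\<Union>T\<in>\<G>. L - Op T)"
      using small countable_subset by metis
    then obtain y where "y \<in> L \<inter> V" "y \<notin> (\<Union>T\<in>\<G>. L - Op T)"
      by blast
    then have "y \<in> \<Inter>\<G> \<inter> W"
      using Op V by blast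
    then show "\<Inter>\<G> \<inter> W \<noteq> {}" by blast
  qed
qed

section \<open>Splitting finite families of open subsets of a dense set of reals\<close>

lemma finite_family_uniform_radius:
  fixes c :: "'b \<Rightarrow> 'a::metric_space"
  assumes "finite \<B>" "\<And>B. B \<in> \<B> \<Longrightarrow> 0 < \<rho> B"
  shows "\<exists>r>0. (\<forall>B\<in>\<B>. r \<le> \<rho> B) \<and> (\<forall>B\<in>\<B>. \<forall>B'\<in>\<B>. c B \<noteq> c B' \<longrightarrow> 3 * r \<le> dist (c B) (c B'))"
proof -
  have below: "\<forall>\<^sub>F r in at_right 0. r \<le> d" if "0 < d" for d :: real
    unfolding eventually_at_right_field using that by (intro exI[of _ d]) auto
  have "\<forall>\<^sub>F r in at_right 0. 0 < r \<and> (\<forall>B\<in>\<B>. r \<le> \<rho> B) \<and>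
      (\<forall>B\<in>\<B>. \<forall>B'\<in>\<B>. c B \<noteq> c B' \<longrightarrow> 3 * r \<le> dist (c B) (c B'))"
  proof (intro eventually_conj eventually_ball_finite ballI assms(1))
    show "\<forall>\<^sub>F r in at_right 0. (0::real) < r"
      by (rule eventually_at_right_less)
    show "\<forall>\<^sub>F r in at_right 0. r \<le> \<rho> B" if "B \<in> \<B>" for B
      using below assms(2)[OF that] .
    show "\<forall>\<^sub>F r in at_right 0. c B \<noteq> c B' \<longrightarrow> 3 * r \<le> dist (c B) (c B')" for B B'
    proof (cases "c B = c B'")
      case False
      then have "\<forall>\<^sub>F r in at_right 0. r \<le> dist (c B) (c B') / 3"
        by (intro below) simp
      then show ?thesis
        by eventually_elim simp
    qed simp
  qed
  then show ?thesis
    using eventually_happens'[OF trivial_limit_at_right_real] by blast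
qed

definition splits :: "real set \<Rightarrow> real \<Rightarrow> real set set \<Rightarrow> (bool \<Rightarrow> real set \<Rightarrow> real set) \<Rightarrow> bool" where
  "splits L q \<B> J \<longleftrightarrow>
     (\<forall>b. \<forall>B\<in>\<B>. (\<exists>a c. a < c \<and> J b B = {a..c}) \<and> L \<inter> J b B \<subseteq> B \<and> q \<notin> J b B) \<and>
     (\<forall>B\<in>\<B>. \<forall>B'\<in>\<B>. J True B \<inter> J False B' = {})"

lemma dense_open_subspace_point_ball:
  fixes q :: "'a::{metric_space,perfect_space}"
  assumes dense: "closure L = UNIV" and B: "openin (top_of_set L) B" "B \<noteq> {}"
  shows "\<exists>c \<rho>. c \<in> L \<and> 0 < \<rho> \<and> \<rho> < dist c q \<and> L \<inter> cball c \<rho> \<subseteq> B"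
proof -
  obtain U where U: "open U" "B = L \<inter> U"
    using B(1) unfolding openin_open by blast
  have "U - {q} \<noteq> {}"
    using U B(2) not_open_singleton[of q] by (metis Diff_eq_empty_iff inf_bot_right subset_singletonD)
  then have "L \<inter> (U - {q}) \<noteq> {}"
    using open_Int_closure_eq_empty[of "U - {q}" L] U(1) dense by (auto simp: open_delete)
  then obtain c where c: "c \<in> L" "c \<in> U" "c \<noteq> q"
    by blast
  obtain e where e: "0 < e" "ball c e \<subseteq> U"
    using U(1) c(2) open_contains_ball by blast
  define \<rho> where "\<rho> = min (e / 2) (dist c q / 2)"
  have "0 < dist c q"
    using c(3) by simp
  moreover have "\<rho> \<le> dist c q / 2"
    unfolding \<rho>_def by simp
  ultimately have "\<rho> < dist c q"
    by linarith
  moreover have "0 < \<rho>"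
    unfolding \<rho>_def using e(1) c(3) by simp
  moreover have "cball c \<rho> \<subseteq> U"
    using e(2) \<open>0 < \<rho>\<close> unfolding \<rho>_def by (force simp: subset_iff)
  ultimately show ?thesis
    using c(1) U(2) by blast
qed

lemma splits_exists:
  assumes dense: "closure L = UNIV" and "finite \<B>"
    and \<B>: "\<forall>B\<in>\<B>. openin (top_of_set L) B \<and> B \<noteq> {}"
  shows "\<exists>J. splits L q \<B> J"
proof -
  have "\<forall>B\<in>\<B>. \<exists>c \<rho>. c \<in> L \<and> 0 < \<rho> \<and> \<rho> < dist c q \<and> L \<inter> cball c \<rho> \<subseteq> B"
    using dense_open_subspace_point_ball[OF dense] \<B> by blast
  then obtain c \<rho> where c\<rho>: "\<And>B. B \<in> \<B> \<Longrightarrow> c B \<in> L \<and> 0 < \<rho> B \<and> \<rho> B < dist (c B) q \<and> L \<inter> cball (c B) (\<rho> B) \<subseteq> B"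
    by metis
  obtain r where r: "0 < r" "\<And>B. B \<in> \<B> \<Longrightarrow> r \<le> \<rho> B"
    "\<And>B B'. B \<in> \<B> \<Longrightarrow> B' \<in> \<B> \<Longrightarrow> c B \<noteq> c B' \<Longrightarrow> 3 * r \<le> dist (c B) (c B')"
    using finite_family_uniform_radius[OF \<open>finite \<B>\<close>, of \<rho> c] c\<rho> by blast
  define lo where "lo b B = (if b then c B + r / 2 else c B - r)" for b B
  define J where "J b B = {lo b B .. lo b B + r / 2}" for b B
  have "J b B \<subseteq> cball (c B) (\<rho> B)" if "B \<in> \<B>" for b B
    using r(1) r(2)[OF that] unfolding J_def lo_def by (auto simp: dist_real_def)
  then have "L \<inter> J b B \<subseteq> B \<and> q \<notin> J b B" if "B \<in> \<B>" for b B
    using c\<rho>[OF that] that by (fastforce simp: dist_commute)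
  moreover have "\<exists>a d. a < d \<and> J b B = {a..d}" for b B
    unfolding J_def using r(1) by (intro exI[of _ "lo b B"] exI[of _ "lo b B + r / 2"]) simp
  moreover have "J True B \<inter> J False B' = {}" if "B \<in> \<B>" "B' \<in> \<B>" for B B'
    using r(1) r(3)[OF that] unfolding J_def lo_def by (cases "c B = c B'") (auto simp: dist_real_def)
  ultimately show ?thesis
    unfolding splits_def by blast
qed

definition split_at :: "real set \<Rightarrow> real \<Rightarrow> real set set \<Rightarrow> bool \<Rightarrow> real set \<Rightarrow> real set" where
  "split_at L q \<B> = (SOME J. splits L q \<B> J)"

lemma splits_split_at:
  assumes "closure L = UNIV" "finite \<B>" "\<forall>B\<in>\<B>. openin (top_of_set L) B \<and> B \<noteq> {}"
  shows "splits L q \<B> (split_at L q \<B>)"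
  unfolding split_at_def using splits_exists[OF assms] by (rule someI_ex)

lemma BM_alice_legal_split_at:
  assumes dense: "closure L = UNIV" and "finite \<B>" "\<forall>B\<in>\<B>. openin (top_of_set L) B \<and> B \<noteq> {}"
  shows "BM_alice_legal (top_of_set L) \<B> (\<lambda>B. L \<inter> interior (split_at L q \<B> b B))"
  unfolding BM_alice_legal_def
proof (intro ballI conjI)
  fix B assume B: "B \<in> \<B>"
  obtain a c where ac: "a < c" "split_at L q \<B> b B = {a..c}" "L \<inter> {a..c} \<subseteq> B"
    using splits_split_at[OF assms] B unfolding splits_def by metis
  show "openin (top_of_set L) (L \<inter> interior (split_at L q \<B> b B))"
    unfolding openin_open by blast
  have "L \<inter> {a<..<c} \<noteq> {}"
    using open_Int_closure_eq_empty[of "{a<..<c}" L] dense ac(1) by auto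
  then show "L \<inter> interior (split_at L q \<B> b B) \<noteq> {}"
    using ac(2) by simp
  show "L \<inter> interior (split_at L q \<B> b B) \<subseteq> B"
    using ac(2,3) interior_subset by blast
qed

section \<open>Alice against a strategy with finite moves\<close>

lemma uncountable_nat_sets: "uncountable (UNIV :: nat set set)"
  using countable_eqpoll[OF _ eqpoll_sym[OF nat_sets_eqpoll_reals]] uncountable_UNIV_real by blast

locale BM_fin_dense_reals =
  fixes L :: "real set" and \<sigma> :: "real set \<Rightarrow> (real set \<Rightarrow> real set) list \<Rightarrow> real set set"
  assumes dense: "closure L = UNIV"
    and winning: "BM_bob_winning_strategy (top_of_set L) finite \<sigma>"
begin

primrec play :: "nat set \<Rightarrow> nat \<Rightarrow> (real set \<Rightarrow> real set) list" where
  "play \<alpha> 0 = []"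
| "play \<alpha> (Suc n) =
     play \<alpha> n @ [\<lambda>B. L \<inter> interior (split_at L (from_nat_into \<rat> n) (\<sigma> L (play \<alpha> n)) (n \<in> \<alpha>) B)]"

definition bob :: "nat set \<Rightarrow> nat \<Rightarrow> real set set" where
  "bob \<alpha> n = \<sigma> L (play \<alpha> n)"

definition piece :: "nat set \<Rightarrow> nat \<Rightarrow> real set \<Rightarrow> real set" where
  "piece \<alpha> n = split_at L (from_nat_into \<rat> n) (bob \<alpha> n) (n \<in> \<alpha>)"

definition answer :: "nat set \<Rightarrow> nat \<Rightarrow> real set \<Rightarrow> real set" where
  "answer \<alpha> n B = L \<inter> interior (piece \<alpha> n B)"

definition level :: "nat \<Rightarrow> nat set \<Rightarrow> real set" where
  "level n \<alpha> = (\<Union>B\<in>bob \<alpha> n. piece \<alpha> n B)"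

lemma BM_bob_move_answer: "BM_bob_move \<sigma> L (answer \<alpha>) n = bob \<alpha> n"
proof -
  have "map (answer \<alpha>) [0..<n] = play \<alpha> n"
    by (induction n) (simp_all add: answer_def piece_def bob_def)
  then show ?thesis
    unfolding BM_bob_move_def bob_def by simp
qed

lemma play_cong: "(\<And>k. k < n \<Longrightarrow> k \<in> \<alpha> \<longleftrightarrow> k \<in> \<beta>) \<Longrightarrow> play \<alpha> n = play \<beta> n"
  by (induction n) auto

lemma winning_against_answer:
  shows "BM_bob_legal (top_of_set L) finite L (bob \<alpha> 0)"
    and "\<forall>k\<le>n. BM_alice_legal (top_of_set L) (bob \<alpha> k) (answer \<alpha> k) \<Longrightarrow>
      BM_bob_legal (top_of_set L) finite (\<Union> (answer \<alpha> n ` bob \<alpha> n)) (bob \<alpha> (Suc n))"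
    and "\<forall>n. BM_alice_legal (top_of_set L) (bob \<alpha> n) (answer \<alpha> n) \<Longrightarrow> (\<Inter>n. \<Union> (bob \<alpha> n)) \<noteq> {}"
proof -
  have "L \<noteq> {}"
    using dense by auto
  then have "openin (top_of_set L) L \<and> L \<noteq> {}"
    by simp
  note win = winning[unfolded BM_bob_winning_strategy_def, rule_format, OF this, of "answer \<alpha>",
      unfolded BM_bob_move_answer]
  show "BM_bob_legal (top_of_set L) finite L (bob \<alpha> 0)"
    using win by (rule conjunct1)
  show "\<forall>k\<le>n. BM_alice_legal (top_of_set L) (bob \<alpha> k) (answer \<alpha> k) \<Longrightarrow>
      BM_bob_legal (top_of_set L) finite (\<Union> (answer \<alpha> n ` bob \<alpha> n)) (bob \<alpha> (Suc n))"
    using win by blast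
  show "\<forall>n. BM_alice_legal (top_of_set L) (bob \<alpha> n) (answer \<alpha> n) \<Longrightarrow> (\<Inter>n. \<Union> (bob \<alpha> n)) \<noteq> {}"
    using win by blast
qed

lemma bob_legal: "finite (bob \<alpha> n) \<and> (\<forall>B\<in>bob \<alpha> n. openin (top_of_set L) B \<and> B \<noteq> {})"
proof (induction n rule: less_induct)
  case (less n)
  have alice: "BM_alice_legal (top_of_set L) (bob \<alpha> k) (answer \<alpha> k)" if "k < n" for k
    using BM_alice_legal_split_at[OF dense] less[OF that]
    unfolding answer_def piece_def by blast
  have "\<exists>U. BM_bob_legal (top_of_set L) finite U (bob \<alpha> n)"
  proof (cases n)
    case (Suc m)
    then have "\<forall>k\<le>m. BM_alice_legal (top_of_set L) (bob \<alpha> k) (answer \<alpha> k)"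
      using alice by simp
    then show ?thesis
      using winning_against_answer(2) Suc by blast
  qed (use winning_against_answer(1) in blast)
  then show ?case
    unfolding BM_bob_legal_def by blast
qed

lemma bob_splits: "splits L (from_nat_into \<rat> n) (bob \<alpha> n) (split_at L (from_nat_into \<rat> n) (bob \<alpha> n))"
  using bob_legal[of \<alpha> n] by (intro splits_split_at[OF dense]) auto

lemma answer_legal: "BM_alice_legal (top_of_set L) (bob \<alpha> n) (answer \<alpha> n)"
  unfolding answer_def piece_def using bob_legal[of \<alpha> n]
  by (intro BM_alice_legal_split_at[OF dense]) auto

lemma exists_point_in_levels: "\<exists>y\<in>L. \<forall>n. y \<in> level n \<alpha>"
proof -
  have "(\<Inter>n. \<Union> (bob \<alpha> n)) \<noteq> {}"
    using answer_legal by (intro winning_against_answer(3)) blast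
  then obtain y where y: "\<And>n. y \<in> \<Union> (bob \<alpha> n)"
    by blast
  have "y \<in> L \<inter> level n \<alpha>" for n
  proof -
    have "BM_bob_legal (top_of_set L) finite (\<Union> (answer \<alpha> n ` bob \<alpha> n)) (bob \<alpha> (Suc n))"
      using answer_legal by (intro winning_against_answer(2)) blast
    then have "y \<in> \<Union> (answer \<alpha> n ` bob \<alpha> n)"
      using y[of "Suc n"] unfolding BM_bob_legal_def by blast
    then show ?thesis
      unfolding answer_def level_def using interior_subset by blast
  qed
  then show ?thesis by blast
qed

lemma closed_level: "closed (level n \<alpha>)"
proof -
  have "closed (piece \<alpha> n B)" if "B \<in> bob \<alpha> n" for B
    using bob_splits that unfolding splits_def piece_def by (metis closed_atLeastAtMost)
  then show ?thesis
    unfolding level_def using bob_legal by blast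
qed

lemma rat_notin_level: "from_nat_into \<rat> n \<notin> level n \<alpha>"
  using bob_splits unfolding level_def piece_def splits_def by blast

lemma level_prefix: "level n \<alpha> = level n (\<alpha> \<inter> {..n})"
proof -
  have "play \<alpha> n = play (\<alpha> \<inter> {..n}) n"
    by (rule play_cong) auto
  then have "bob \<alpha> n = bob (\<alpha> \<inter> {..n}) n"
    unfolding bob_def by simp
  then show ?thesis
    unfolding level_def piece_def by simp
qed

lemma level_disjoint:
  assumes "\<And>k. k < n \<Longrightarrow> k \<in> \<alpha> \<longleftrightarrow> k \<in> \<beta>" "n \<in> \<alpha>" "n \<notin> \<beta>"
  shows "level n \<alpha> \<inter> level n \<beta> = {}"
proof -
  have "bob \<alpha> n = bob \<beta> n"
    unfolding bob_def using play_cong[OF assms(1)] by simp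
  moreover have "\<forall>B\<in>bob \<alpha> n. \<forall>B'\<in>bob \<alpha> n.
      split_at L (from_nat_into \<rat> n) (bob \<alpha> n) True B \<inter> split_at L (from_nat_into \<rat> n) (bob \<alpha> n) False B' = {}"
    using bob_splits[of n \<alpha>] unfolding splits_def by blast
  ultimately show ?thesis
    using assms(2,3) unfolding level_def piece_def by auto
qed

lemma closed_Union_levels: "closed (\<Union>\<alpha>. level n \<alpha>)"
proof -
  have "range (level n) \<subseteq> level n ` Pow {..n}"
    using level_prefix by blast
  then have "finite (range (level n))"
    by (rule finite_surj[rotated]) simp
  then show ?thesis
    using closed_level by (intro closed_Union) auto
qed

lemma inj_if_in_levels:
  assumes "\<And>\<alpha> n. y \<alpha> \<in> level n \<alpha>"
  shows "inj y"
proof (rule injI, rule ccontr)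
  fix \<alpha> \<beta> assume eq: "y \<alpha> = y \<beta>" and "\<alpha> \<noteq> \<beta>"
  then have "\<exists>n. n \<in> \<alpha> \<longleftrightarrow> n \<notin> \<beta>"
    by blast
  define n where "n = (LEAST n. n \<in> \<alpha> \<longleftrightarrow> n \<notin> \<beta>)"
  have n: "n \<in> \<alpha> \<longleftrightarrow> n \<notin> \<beta>"
    unfolding n_def by (rule LeastI_ex) fact
  have agree: "k \<in> \<alpha> \<longleftrightarrow> k \<in> \<beta>" if "k < n" for k
    using not_less_Least[of k "\<lambda>n. n \<in> \<alpha> \<longleftrightarrow> n \<notin> \<beta>"] that unfolding n_def by blast
  have "y \<alpha> \<in> level n \<alpha> \<inter> level n \<beta>"
    using assms[of \<alpha> n] assms[of \<beta> n] eq by simp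
  moreover have "level n \<alpha> \<inter> level n \<beta> = {}"
    using n level_disjoint[OF agree] level_disjoint[of n \<beta> \<alpha>] agree by (cases "n \<in> \<alpha>") auto
  ultimately show False
    by blast
qed

theorem exists_uncountable_Int_closed_nowhere_dense:
  "\<exists>K. closed K \<and> interior K = {} \<and> uncountable (L \<inter> K)"
proof -
  obtain y where y: "\<And>\<alpha>. y \<alpha> \<in> L" "\<And>\<alpha> n. y \<alpha> \<in> level n \<alpha>"
    using exists_point_in_levels by metis
  define K where "K = (\<Inter>n. \<Union>\<alpha>. level n \<alpha>)"
  have "closed K"
    unfolding K_def using closed_Union_levels by blast
  moreover have "K \<inter> \<rat> = {}"
  proof -
    have "\<rat> = range (from_nat_into \<rat>)"
      by (metis Rats_0 countable_rat empty_iff range_from_nat_into)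
    then show ?thesis
      unfolding K_def using rat_notin_level by blast
  qed
  then have "interior K = {}"
    using open_Int_closure_eq_empty[of "interior K" \<rat>] Rats_closure_real interior_subset by blast
  moreover have "range y \<subseteq> L \<inter> K"
    unfolding K_def using y by blast
  then have "uncountable (L \<inter> K)"
    using countable_image_inj_on[of y UNIV] inj_if_in_levels[OF y(2)] uncountable_nat_sets countable_subset
    by blast
  ultimately show ?thesis
    by blast
qed

end

lemma Luzin_set_not_bob_wins_BM_fin:
  assumes "Luzin_set L"
  shows "\<not> bob_wins_BM_fin (top_of_set L)"
proof
  assume "bob_wins_BM_fin (top_of_set L)"
  then obtain \<sigma> where "BM_bob_winning_strategy (top_of_set L) finite \<sigma>"
    unfolding BM_bob_has_winning_strategy_def by blast
  then interpret BM_fin_dense_reals L \<sigma>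
    using Luzin_set_dense[OF assms] by unfold_locales
  obtain K where "closed K" "interior K = {}" "uncountable (L \<inter> K)"
    using exists_uncountable_Int_closed_nowhere_dense by blast
  then show False
    using assms unfolding Luzin_set_def by blast
qed

theorem corollary4p15:
  assumes "continuum_hypothesis"
  shows "\<exists>X :: real set set topology. bob_wins_BM_omega X \<and> \<not> bob_wins_BM_fin X"
proof -
  obtain L where L: "Luzin_set L"
    using continuum_hypothesis_imp_Luzin_set[OF assms] by blast
  \<comment> \<open>A homeomorphic copy of the subspace L on the carrier type of the statement.\<close>
  define Y where "Y = pullback_topology ((\<lambda>x. {{x}}) ` L) (\<lambda>S. the_elem (the_elem S)) (top_of_set L)"
  have hom: "top_of_set L homeomorphic_space Y"
    unfolding Y_def
    by (rule homeomorphic_space_pullback_topology[where X = "top_of_set L", simplified]) simp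
  have "bob_wins_BM_omega (top_of_set L)"
    using second_countable_Baire_imp_bob_wins_BM_omega second_countable_subtopology
      second_countable_euclidean Luzin_set_Baire_space[OF L] by blast
  then have "bob_wins_BM_omega Y"
    by (rule BM_bob_has_winning_strategy_homeomorphic[where P = countable and Q = countable,
        OF hom countable_image, rotated])
  moreover have "\<not> bob_wins_BM_fin Y"
    using BM_bob_has_winning_strategy_homeomorphic[where P = finite and Q = finite,
        OF homeomorphic_space_sym[THEN iffD1, OF hom] finite_imageI]
      Luzin_set_not_bob_wins_BM_fin[OF L] by blast
  ultimately show ?thesis
    by blast
qed

end
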